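(* Let $m\ge 3$. Let $H_2$ be the graph with vertices $v_1,\dots,v_6$ and edges $v_1v_2,v_2v_3,v_3v_4,v_4v_5,v_5v_6,v_6v_1,v_2v_5,v_3v_6$, and let $H_4$ be the graph with vertices $v_1,\dots,v_6$ and edges $v_1v_2,v_2v_3,v_3v_4,v_4v_5,v_5v_6,v_6v_1,v_2v_6,v_3v_5$ (each has exactly two vertices of degree $2$, namely $v_1$ and $v_4$). Let $G_1$ (respectively $G_2$) be the cubic graph constructed from the cycle $C_m$ by replacing each vertex with a copy of $H_4$ (respectively $H_2$), where each edge $uv$ of $C_m$ is replaced by an edge joining a degree-$2$ vertex of the copy for $u$ to a degree-$2$ vertex of the copy for $v$, each degree-$2$ vertex being used exactly once. Then (a) $G_1$ is a bridgeless, Class $1$ cubic graph with triangles; (b) $G_2$ is a bridgeless, Class $1$, triangle-free cubic graph; and (c) for $i=1,2$, $c_2(G_i)-\left\lceil\frac{|V(G_i)|+2}{4}\right\rceil=\left\lfloor\frac{m-1}{2}\right\rfloor$.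
   Context: A graph is bridgeless if it has no bridge. A graph of maximum degree $\Delta$ is Class $1$ if its chromatic index is $\Delta$ and Class $2$ if it is $\Delta+1$. For a graph $G=(V,E)$ and $S_0\subseteq V$, the irreversible $2$-threshold conversion process sets, for $t=1,2,\dots$, $S_t=S_{t-1}\cup\{v: v \text{ has at least } 2 \text{ neighbours in } S_{t-1}\}$; $S_0$ is a $2$-conversion set if $S_t=V$ for some $t$, and $c_2(G)$ is the minimum size of a $2$-conversion set. *)

theory Defs
  imports Complex_Main
begin

definition neighbours :: "'a set \<Rightarrow> ('a \<Rightarrow> 'a \<Rightarrow> bool) \<Rightarrow> 'a \<Rightarrow> 'a set" where
  "neighbours V E v = {u \<in> V. E v u}"

definition degree :: "'a set \<Rightarrow> ('a \<Rightarrow> 'a \<Rightarrow> bool) \<Rightarrow> 'a \<Rightarrow> nat" where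
  "degree V E v = card (neighbours V E v)"

definition simple_graph :: "'a set \<Rightarrow> ('a \<Rightarrow> 'a \<Rightarrow> bool) \<Rightarrow> bool" where
  "simple_graph V E \<longleftrightarrow> finite V \<and> (\<forall>u v. E u v \<longrightarrow> u \<in> V \<and> v \<in> V \<and> E v u \<and> u \<noteq> v)"

definition cubic :: "'a set \<Rightarrow> ('a \<Rightarrow> 'a \<Rightarrow> bool) \<Rightarrow> bool" where
  "cubic V E \<longleftrightarrow> simple_graph V E \<and> (\<forall>v\<in>V. degree V E v = 3)"

definition edges :: "'a set \<Rightarrow> ('a \<Rightarrow> 'a \<Rightarrow> bool) \<Rightarrow> 'a set set" where
  "edges V E = {{u, v} | u v. u \<in> V \<and> v \<in> V \<and> E u v}"

definition reachable :: "'a set \<Rightarrow> ('a \<Rightarrow> 'a \<Rightarrow> bool) \<Rightarrow> 'a \<Rightarrow> 'a \<Rightarrow> bool" where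
  "reachable V E u v = (\<lambda>x y. x \<in> V \<and> y \<in> V \<and> E x y)\<^sup>*\<^sup>* u v"

definition is_bridge :: "'a set \<Rightarrow> ('a \<Rightarrow> 'a \<Rightarrow> bool) \<Rightarrow> 'a \<Rightarrow> 'a \<Rightarrow> bool" where
  "is_bridge V E u v \<longleftrightarrow> u \<in> V \<and> v \<in> V \<and> E u v \<and>
     \<not> reachable V (\<lambda>x y. E x y \<and> {x, y} \<noteq> {u, v}) u v"

definition bridgeless :: "'a set \<Rightarrow> ('a \<Rightarrow> 'a \<Rightarrow> bool) \<Rightarrow> bool" where
  "bridgeless V E \<longleftrightarrow> (\<nexists>u v. is_bridge V E u v)"

definition max_degree :: "'a set \<Rightarrow> ('a \<Rightarrow> 'a \<Rightarrow> bool) \<Rightarrow> nat" where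
  "max_degree V E = Max (degree V E ` V)"

definition proper_edge_colouring ::
  "'a set \<Rightarrow> ('a \<Rightarrow> 'a \<Rightarrow> bool) \<Rightarrow> nat \<Rightarrow> ('a set \<Rightarrow> nat) \<Rightarrow> bool" where
  "proper_edge_colouring V E k c \<longleftrightarrow>
     (\<forall>e\<in>edges V E. c e < k) \<and>
     (\<forall>e\<in>edges V E. \<forall>f\<in>edges V E. e \<noteq> f \<and> e \<inter> f \<noteq> {} \<longrightarrow> c e \<noteq> c f)"

definition chromatic_index :: "'a set \<Rightarrow> ('a \<Rightarrow> 'a \<Rightarrow> bool) \<Rightarrow> nat" where
  "chromatic_index V E = (LEAST k. \<exists>c. proper_edge_colouring V E k c)"

definition class1 :: "'a set \<Rightarrow> ('a \<Rightarrow> 'a \<Rightarrow> bool) \<Rightarrow> bool" where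
  "class1 V E \<longleftrightarrow> chromatic_index V E = max_degree V E"

definition has_triangle :: "'a set \<Rightarrow> ('a \<Rightarrow> 'a \<Rightarrow> bool) \<Rightarrow> bool" where
  "has_triangle V E \<longleftrightarrow> (\<exists>a\<in>V. \<exists>b\<in>V. \<exists>c\<in>V. E a b \<and> E b c \<and> E a c)"

definition conv_step :: "'a set \<Rightarrow> ('a \<Rightarrow> 'a \<Rightarrow> bool) \<Rightarrow> 'a set \<Rightarrow> 'a set" where
  "conv_step V E S = S \<union> {v \<in> V. card {u \<in> S. E v u} \<ge> 2}"

definition conversion_set :: "'a set \<Rightarrow> ('a \<Rightarrow> 'a \<Rightarrow> bool) \<Rightarrow> 'a set \<Rightarrow> bool" where
  "conversion_set V E S0 \<longleftrightarrow> S0 \<subseteq> V \<and> (\<exists>t. (conv_step V E ^^ t) S0 = V)"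

definition c2 :: "'a set \<Rightarrow> ('a \<Rightarrow> 'a \<Rightarrow> bool) \<Rightarrow> nat" where
  "c2 V E = (LEAST k. \<exists>S. conversion_set V E S \<and> card S = k)"

definition cyc6 :: "nat set set" where
  "cyc6 = {{1,2},{2,3},{3,4},{4,5},{5,6},{6,1}}"

definition H2 :: "nat \<Rightarrow> nat \<Rightarrow> bool" where
  "H2 j k \<longleftrightarrow> {j, k} \<in> cyc6 \<union> {{2,5},{3,6}}"

definition H4 :: "nat \<Rightarrow> nat \<Rightarrow> bool" where
  "H4 j k \<longleftrightarrow> {j, k} \<in> cyc6 \<union> {{2,6},{3,5}}"

text \<open>Vertex (i, j) is vertex v_j of the i-th copy, i < m.\<close>
definition ring_V :: "nat \<Rightarrow> (nat \<times> nat) set" where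
  "ring_V m = {0..<m} \<times> {1..6}"

text \<open>Copies are placed along the cycle C_m = 0,1,...,m-1,0; the edge between
  copies i and i+1 (mod m) joins v_4 of copy i to v_1 of copy i+1.\<close>
definition ring_E :: "(nat \<Rightarrow> nat \<Rightarrow> bool) \<Rightarrow> nat \<Rightarrow> nat \<times> nat \<Rightarrow> nat \<times> nat \<Rightarrow> bool" where
  "ring_E H m x y \<longleftrightarrow> x \<in> ring_V m \<and> y \<in> ring_V m \<and>
     ((fst x = fst y \<and> H (snd x) (snd y)) \<or>
      (snd x = 4 \<and> snd y = 1 \<and> fst y = (fst x + 1) mod m) \<or>
      (snd x = 1 \<and> snd y = 4 \<and> fst x = (fst y + 1) mod m))"

abbreviation "G1_E m \<equiv> ring_E H4 m"
abbreviation "G2_E m \<equiv> ring_E H2 m"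

end

theory Submission
  imports Defs
begin

(* Both graphs are rings of m six-vertex gadgets, the port edge v4 v1 joining copy i to copy i + 1.
  Cubicity is local, and the hexagon v1 ... v6 of a gadget, coloured alternately, together with the
  perfect matching formed by the chords and the port edges gives a 3-edge-colouring. Every edge
  lies on a cycle (a short cycle inside a gadget, or the long cycle through v1 v2 v3 v4 of all
  copies), so there is no bridge; G2 is bipartite by the parity of the vertex index, hence has no
  triangle. For c2: in each copy every vertex misses one of a few nonempty vertex sets whose
  members have at most one neighbour outside the set; such a set is never infected from outside,
  so a conversion set meets every copy twice, while two well-chosen vertices per copy convert the
  whole graph in two rounds. Thus c2 = 2m, and with |V| = 6m the claimed identity is arithmetic. *)

lemma proper_edge_colouringI:
  assumes sym: "\<And>x y. E x y \<Longrightarrow> E y x"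
    and distinct_at_vertex: "\<And>x y z. E x y \<Longrightarrow> E x z \<Longrightarrow> y \<noteq> z \<Longrightarrow> c {x, y} \<noteq> c {x, z}"
    and bounded: "\<And>e. c e < k"
  shows "proper_edge_colouring V E k c"
  unfolding proper_edge_colouring_def
proof (intro conjI ballI impI)
  fix e f assume e: "e \<in> edges V E" and f: "f \<in> edges V E" and ef: "e \<noteq> f \<and> e \<inter> f \<noteq> {}"
  obtain x where x: "x \<in> e" "x \<in> f" using ef by blast
  obtain y where y: "e = {x, y}" "E x y" using e x sym by (auto simp: edges_def insert_commute)
  obtain z where z: "f = {x, z}" "E x z" using f x sym by (auto simp: edges_def insert_commute)
  show "c e \<noteq> c f" using distinct_at_vertex[OF y(2) z(2)] y(1) z(1) ef by auto
qed (rule bounded)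

lemma degree_le_colours:
  assumes "proper_edge_colouring V E k c" and "v \<in> V"
  shows "degree V E v \<le> k"
proof -
  have bounded: "\<And>e. e \<in> edges V E \<Longrightarrow> c e < k"
    and distinct: "\<And>e f. e \<in> edges V E \<Longrightarrow> f \<in> edges V E \<Longrightarrow> e \<noteq> f \<Longrightarrow> e \<inter> f \<noteq> {} \<Longrightarrow> c e \<noteq> c f"
    using assms(1) by (simp_all add: proper_edge_colouring_def)
  have edge: "{v, u} \<in> edges V E" if "u \<in> neighbours V E v" for u
    using that \<open>v \<in> V\<close> by (auto simp: neighbours_def edges_def)
  have "inj_on (\<lambda>u. c {v, u}) (neighbours V E v)"
  proof (rule inj_onI)
    fix u w assume u: "u \<in> neighbours V E v" and w: "w \<in> neighbours V E v"
      and same: "c {v, u} = c {v, w}"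
    have "{v, u} = {v, w}"
      using distinct[OF edge[OF u] edge[OF w]] same by blast
    then show "u = w" by (auto simp: doubleton_eq_iff)
  qed
  moreover have "(\<lambda>u. c {v, u}) ` neighbours V E v \<subseteq> {..<k}"
    using bounded edge by blast
  ultimately have "card (neighbours V E v) \<le> card {..<k}"
    by (rule card_inj_on_le) simp
  then show ?thesis by (simp add: degree_def)
qed

lemma class1_if_cubic_3_edge_colourable:
  assumes "cubic V E" "V \<noteq> {}" "proper_edge_colouring V E 3 c"
  shows "class1 V E"
proof -
  have "degree V E ` V = {3}" using assms(1,2) by (auto simp: cubic_def)
  then have max: "max_degree V E = 3" by (simp add: max_degree_def)
  obtain v where "v \<in> V" using assms(2) by blast
  then have lower: "3 \<le> k" if "proper_edge_colouring V E k c'" for k c'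
    using degree_le_colours[OF that] assms(1) by (simp add: cubic_def)
  have "chromatic_index V E = 3"
    unfolding chromatic_index_def by (rule Least_equality) (use assms(3) lower in auto)
  with max show ?thesis by (simp add: class1_def)
qed

lemma no_triangle_if_bipartite:
  fixes side :: "'a \<Rightarrow> bool"
  assumes "\<And>x y. E x y \<Longrightarrow> side x \<noteq> side y"
  shows "\<not> has_triangle V E"
proof
  assume "has_triangle V E"
  then obtain a b c where "E a b" "E b c" "E a c" by (auto simp: has_triangle_def)
  then show False using assms by metis
qed

section \<open>Bridges and cycles\<close>

lemma is_bridge_sym:
  assumes sym: "\<And>x y. E x y \<Longrightarrow> E y x" and "is_bridge V E u v"
  shows "is_bridge V E v u"
proof -
  let ?R = "\<lambda>x y. x \<in> V \<and> y \<in> V \<and> E x y \<and> {x, y} \<noteq> {u, v}"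
  have "symp ?R" by (rule sympI) (auto simp: insert_commute sym)
  then have "?R\<^sup>*\<^sup>* v u \<Longrightarrow> ?R\<^sup>*\<^sup>* u v" by (meson symp_rtranclp sympD)
  then show ?thesis using assms(2) sym by (auto simp: is_bridge_def reachable_def insert_commute)
qed

definition cycle_edges :: "'a list \<Rightarrow> ('a \<times> 'a) set" where
  "cycle_edges xs = set (zip xs (rotate1 xs))"

definition cycle_list :: "('a \<Rightarrow> 'a \<Rightarrow> bool) \<Rightarrow> 'a list \<Rightarrow> bool" where
  "cycle_list E xs \<longleftrightarrow> distinct xs \<and> 3 \<le> length xs \<and> (\<forall>(a, b) \<in> cycle_edges xs. E a b)"

lemma mem_cycle_edges_iff:
  "(a, b) \<in> cycle_edges xs \<longleftrightarrow> (\<exists>p < length xs. a = xs ! p \<and> b = xs ! (Suc p mod length xs))"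
  by (auto simp: cycle_edges_def in_set_zip nth_rotate1)

lemma cycle_listI:
  assumes "distinct xs" "3 \<le> length xs"
    and "\<And>p. p < length xs \<Longrightarrow> E (xs ! p) (xs ! (Suc p mod length xs))"
  shows "cycle_list E xs"
  using assms unfolding cycle_list_def by (auto simp: mem_cycle_edges_iff)

lemma cycle_edges_subset: "(a, b) \<in> cycle_edges xs \<Longrightarrow> a \<in> set xs \<and> b \<in> set xs"
  by (auto simp: cycle_edges_def dest: set_zip_leftD set_zip_rightD)

lemma cycle_list_nth:
  assumes "cycle_list E xs" "p < length xs"
  shows "E (xs ! p) (xs ! (Suc p mod length xs))"
proof -
  have "(xs ! p, xs ! (Suc p mod length xs)) \<in> cycle_edges xs"
    unfolding mem_cycle_edges_iff using assms(2) by blast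
  with assms(1) show ?thesis unfolding cycle_list_def by fast
qed

lemma cycle_edges_map: "cycle_edges (map f xs) = map_prod f f ` cycle_edges xs"
  by (simp add: cycle_edges_def rotate1_map zip_map_map map_prod_def flip: set_map)

lemma cycle_list_edges_distinct:
  assumes "cycle_list E xs" and "p < q" "q < p + length xs"
  shows "{xs ! (q mod length xs), xs ! (Suc q mod length xs)} \<noteq>
    {xs ! (p mod length xs), xs ! (Suc p mod length xs)}"
proof -
  define n where "n = length xs"
  have n: "3 \<le> n" and "distinct xs" using assms(1) by (simp_all add: cycle_list_def n_def)
  have same_iff: "xs ! (l mod n) = xs ! (l' mod n) \<longleftrightarrow> l mod n = l' mod n" for l l'
  proof -
    have "l mod n < n" "l' mod n < n" using n by simp_all
    then show ?thesis using nth_eq_iff_index_eq[OF \<open>distinct xs\<close>] by (simp add: n_def)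
  qed
  have not_congruent: "l mod n \<noteq> l' mod n" if "l' < l" "l < l' + n" for l l'
    using that mod_eq_dvd_iff_nat[of l' l n] by (auto dest: dvd_imp_le)
  \<comment> \<open>Equal edges force \<open>q = p + 1\<close> and \<open>p + 2 \<equiv> p (mod n)\<close>, impossible for \<open>n \<ge> 3\<close>.\<close>
  have "{xs ! (q mod n), xs ! (Suc q mod n)} \<noteq> {xs ! (p mod n), xs ! (Suc p mod n)}"
  proof
    assume "{xs ! (q mod n), xs ! (Suc q mod n)} = {xs ! (p mod n), xs ! (Suc p mod n)}"
    then consider "q mod n = p mod n" | "q mod n = Suc p mod n" "Suc q mod n = p mod n"
      by (auto simp: doubleton_eq_iff same_iff)
    then show False
    proof cases
      case 2
      then have "q = Suc p"
        using not_congruent[of q "Suc p"] not_congruent[of "Suc p" q] assms(2,3) n_def by force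
      moreover have "Suc (Suc p) < p + n" using n by simp
      ultimately show False using 2(2) not_congruent[of p "Suc (Suc p)"] by simp
    qed (use not_congruent assms(2,3) n_def in auto)
  qed
  then show ?thesis by (simp add: n_def)
qed

lemma reachable_around_cycle_list:
  assumes cyc: "cycle_list E xs" and "set xs \<subseteq> V" and "p < length xs"
  shows "reachable V (\<lambda>x y. E x y \<and> {x, y} \<noteq> {xs ! p, xs ! (Suc p mod length xs)})
    (xs ! (Suc p mod length xs)) (xs ! p)"
proof -
  define n where "n = length xs"
  define c where "c l = xs ! (l mod n)" for l
  have n: "3 \<le> n" using cyc by (simp add: cycle_list_def n_def)
  have walk: "c l \<in> V \<and> E (c l) (c (Suc l))" for l
  proof -
    have "l mod n < n" using n by simp
    then show ?thesis
      using \<open>set xs \<subseteq> V\<close> nth_mem[of "l mod n" xs] cycle_list_nth[OF cyc, of "l mod n"]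
      by (auto simp: c_def n_def mod_Suc_eq)
  qed
  let ?R = "\<lambda>x y. x \<in> V \<and> y \<in> V \<and> E x y \<and> {x, y} \<noteq> {c p, c (Suc p)}"
  have around: "?R\<^sup>*\<^sup>* (c (Suc p)) (c (Suc p + d))" if "d < n" for d
    using that
  proof (induction d)
    case (Suc d)
    then have "{c (Suc p + d), c (Suc (Suc p + d))} \<noteq> {c p, c (Suc p)}"
      using cycle_list_edges_distinct[OF cyc, of p "Suc p + d"] by (simp add: c_def n_def)
    with Suc walk show ?case by (simp add: rtranclp.rtrancl_into_rtrancl)
  qed simp
  have "Suc p + (n - 1) = p + n" "c (p + n) = c p" using n by (simp_all add: c_def)
  then have "?R\<^sup>*\<^sup>* (c (Suc p)) (c p)" using around[of "n - 1"] n by simp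
  then show ?thesis
    using \<open>p < length xs\<close> by (simp add: reachable_def c_def n_def)
qed

lemma not_bridge_if_on_cycle_list:
  assumes sym: "\<And>x y. E x y \<Longrightarrow> E y x" and cyc: "cycle_list E xs" and "set xs \<subseteq> V"
    and "(a, b) \<in> cycle_edges xs" and "{u, v} = {a, b}"
  shows "\<not> is_bridge V E u v"
proof -
  obtain p where "p < length xs" and uv: "{u, v} = {xs ! p, xs ! (Suc p mod length xs)}"
    using assms(4,5) by (auto simp: mem_cycle_edges_iff)
  then have not_bridge: "\<not> is_bridge V E (xs ! (Suc p mod length xs)) (xs ! p)"
    using reachable_around_cycle_list[OF cyc \<open>set xs \<subseteq> V\<close>]
    by (auto simp: is_bridge_def insert_commute)
  from uv consider "u = xs ! p" "v = xs ! (Suc p mod length xs)"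
    | "u = xs ! (Suc p mod length xs)" "v = xs ! p"
    by (auto simp: doubleton_eq_iff)
  then show ?thesis
  proof cases
    case 1
    then show ?thesis using not_bridge is_bridge_sym[of E, OF sym] by blast
  qed (use not_bridge in simp)
qed

section \<open>Irreversible 2-conversion\<close>

definition immune :: "('a \<Rightarrow> 'a \<Rightarrow> bool) \<Rightarrow> 'a set \<Rightarrow> bool" where
  "immune E C \<longleftrightarrow> (\<forall>v\<in>C. \<forall>u w. E v u \<longrightarrow> E v w \<longrightarrow> u \<notin> C \<longrightarrow> w \<notin> C \<longrightarrow> u = w)"

lemma immune_disjoint_conv_step_iterate:
  assumes "immune E C" and "C \<inter> S = {}"
  shows "C \<inter> (conv_step V E ^^ t) S = {}"
proof (induction t)
  case (Suc t)
  let ?X = "(conv_step V E ^^ t) S"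
  have "v \<notin> conv_step V E ?X" if "v \<in> C" for v
  proof
    assume "v \<in> conv_step V E ?X"
    moreover have "v \<notin> ?X" using Suc that by blast
    ultimately have two: "2 \<le> card {u \<in> ?X. E v u}" by (simp add: conv_step_def)
    then have "finite {u \<in> ?X. E v u}" by (intro card_ge_0_finite) simp
    moreover have "\<not> card {u \<in> ?X. E v u} \<le> Suc 0" using two by simp
    ultimately have "\<not> (\<forall>a\<in>{u \<in> ?X. E v u}. \<forall>b\<in>{u \<in> ?X. E v u}. a = b)"
      using card_le_Suc0_iff_eq by blast
    then obtain u w where "u \<in> ?X" "w \<in> ?X" "E v u" "E v w" "u \<noteq> w" by blast
    then show False using assms(1) Suc that unfolding immune_def by blast
  qed
  then show ?case by auto
qed (use assms(2) in simp)

lemma two_le_card_conversion_set_inter: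
  assumes conv: "conversion_set V E S" and "finite B" "B \<subseteq> V"
    and family: "\<forall>C\<in>\<C>. C \<noteq> {} \<and> C \<subseteq> B \<and> immune E C" and "\<Inter>\<C> = {}"
  shows "2 \<le> card (S \<inter> B)"
proof (rule ccontr)
  assume "\<not> 2 \<le> card (S \<inter> B)"
  then have "\<forall>a\<in>S \<inter> B. \<forall>b\<in>S \<inter> B. a = b"
    using card_le_Suc0_iff_eq[of "S \<inter> B"] \<open>finite B\<close> by simp
  then obtain x where x: "S \<inter> B \<subseteq> {x}" by (cases "S \<inter> B = {}") blast+
  obtain C where "C \<in> \<C>" "x \<notin> C" using \<open>\<Inter>\<C> = {}\<close> by blast
  with family x have C: "C \<noteq> {}" "C \<subseteq> V" "immune E C" "C \<inter> S = {}"
    using \<open>B \<subseteq> V\<close> by blast+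
  obtain t where "(conv_step V E ^^ t) S = V" using conv by (auto simp: conversion_set_def)
  with immune_disjoint_conv_step_iterate[OF C(3,4)] C(1,2) show False by blast
qed

lemma subset_conv_step: "S \<subseteq> conv_step V E S"
  by (auto simp: conv_step_def)

lemma conv_step_mono:
  assumes "finite S'" and "S \<subseteq> S'"
  shows "conv_step V E S \<subseteq> conv_step V E S'"
proof
  fix v assume v: "v \<in> conv_step V E S"
  have "card {u \<in> S. E v u} \<le> card {u \<in> S'. E v u}"
    using assms by (intro card_mono) auto
  with v \<open>S \<subseteq> S'\<close> show "v \<in> conv_step V E S'" by (auto simp: conv_step_def)
qed

lemma conv_stepI:
  assumes "v \<in> V" "finite S" "a \<in> S" "b \<in> S" "a \<noteq> b" "E v a" "E v b"
  shows "v \<in> conv_step V E S"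
proof -
  have "card {a, b} \<le> card {u \<in> S. E v u}"
    using assms by (intro card_mono) auto
  with assms show ?thesis by (simp add: conv_step_def)
qed

lemma conversion_set_two_rounds:
  assumes "finite V" "S \<subseteq> V" "T \<subseteq> conv_step V E S" "V \<subseteq> conv_step V E T"
  shows "conversion_set V E S"
proof -
  have step_V: "conv_step V E X \<subseteq> V" if "X \<subseteq> V" for X
    using that by (auto simp: conv_step_def)
  have "finite (conv_step V E S)" using step_V[OF assms(2)] assms(1) by (rule finite_subset)
  then have "V \<subseteq> conv_step V E (conv_step V E S)"
    using assms(3,4) conv_step_mono by blast
  moreover have "conv_step V E (conv_step V E S) \<subseteq> V" using step_V assms(2) by blast
  ultimately have "(conv_step V E ^^ 2) S = V" by (simp add: numeral_2_eq_2)
  with assms(2) show ?thesis by (auto simp: conversion_set_def)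
qed

definition ring_succ :: "nat \<Rightarrow> nat \<Rightarrow> nat" where
  "ring_succ m i = (i + 1) mod m"

definition ring_pred :: "nat \<Rightarrow> nat \<Rightarrow> nat" where
  "ring_pred m i = (i + m - 1) mod m"

lemma ring_succ_less: "i < m \<Longrightarrow> ring_succ m i < m"
  by (simp add: ring_succ_def)

lemma ring_pred_less: "i < m \<Longrightarrow> ring_pred m i < m"
  by (simp add: ring_pred_def)

lemma ring_succ_pred: "i < m \<Longrightarrow> ring_succ m (ring_pred m i) = i"
  by (cases i) (auto simp: ring_succ_def ring_pred_def mod_Suc_eq mod_if)

lemma eq_ring_succ_iff:
  assumes "i < m" "i' < m"
  shows "i = ring_succ m i' \<longleftrightarrow> i' = ring_pred m i"
proof (cases "i' + 1 < m")
  case True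
  then show ?thesis using assms by (cases i) (auto simp: ring_succ_def ring_pred_def mod_if)
next
  case False
  then have "i' = m - 1" using assms by auto
  then show ?thesis using assms by (cases i) (auto simp: ring_succ_def ring_pred_def mod_if)
qed

lemma ring_E_iff:
  "ring_E H m (i, j) y \<longleftrightarrow> i < m \<and> j \<in> {1..6} \<and> fst y < m \<and> snd y \<in> {1..6} \<and>
     (fst y = i \<and> H j (snd y) \<or> j = 4 \<and> y = (ring_succ m i, 1) \<or> j = 1 \<and> y = (ring_pred m i, 4))"
proof (cases y)
  case (Pair i' j')
  have "i < m \<Longrightarrow> i' < m \<Longrightarrow> i = (i' + 1) mod m \<longleftrightarrow> i' = ring_pred m i"
    using eq_ring_succ_iff by (simp add: ring_succ_def)
  with Pair show ?thesis by (auto simp: ring_E_def ring_V_def ring_succ_def)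
qed

lemma ring_E_sym:
  assumes "\<And>j k. H j k \<Longrightarrow> H k j" and "ring_E H m x y"
  shows "ring_E H m y x"
  using assms by (auto simp: ring_E_def)

lemma simple_graph_ring_E:
  assumes "\<And>j k. H j k \<Longrightarrow> H k j" and "\<And>j. \<not> H j j"
  shows "simple_graph (ring_V m) (ring_E H m)"
  using assms ring_E_sym[of H m] by (auto simp: simple_graph_def ring_V_def ring_E_def)

lemma neighbours_ring_E: "neighbours (ring_V m) (ring_E H m) v = {u. ring_E H m v u}"
  by (auto simp: neighbours_def ring_E_def)

lemma ring_V_iff: "(i, j) \<in> ring_V m \<longleftrightarrow> i < m \<and> j \<in> {1, 2, 3, 4, 5, 6}"
  by (auto simp: ring_V_def)

lemma card_ring_V: "card (ring_V m) = 6 * m"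
  by (simp add: ring_V_def card_cartesian_product)

lemma cycle_list_ring_copy:
  assumes "cycle_list H xs" "set xs \<subseteq> {1..6}" "i < m"
  shows "cycle_list (ring_E H m) (map (Pair i) xs)"
proof -
  have "ring_E H m (i, a) (i, b)" if "(a, b) \<in> cycle_edges xs" for a b
    using that assms cycle_edges_subset[OF that] by (auto simp: cycle_list_def ring_E_iff)
  then show ?thesis
    using assms(1) by (auto simp: cycle_list_def cycle_edges_map distinct_map inj_on_def)
qed

(* The cycle through v1 v2 v3 v4 of the copies 0, 1, ..., m - 1 in turn; it contains every
  port edge. *)
definition ring_cycle :: "nat \<Rightarrow> (nat \<times> nat) list" where
  "ring_cycle m = map (\<lambda>l. (l div 4, l mod 4 + 1)) [0..<4 * m]"

lemma cycle_list_ring_cycle: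
  assumes "H 1 2" "H 2 3" "H 3 4" and "0 < m"
  shows "cycle_list (ring_E H m) (ring_cycle m)"
proof -
  have inj: "inj (\<lambda>l::nat. (l div 4, l mod 4 + 1))"
    by (rule injI) (metis div_mod_decomp Suc_inject add.commute plus_1_eq_Suc prod.inject)
  then have "distinct (ring_cycle m)"
    unfolding ring_cycle_def distinct_map using inj_on_subset[OF inj subset_UNIV] by simp
  moreover have "ring_E H m (ring_cycle m ! p) (ring_cycle m ! (Suc p mod (4 * m)))"
    if "p < 4 * m" for p
  proof -
    have nth: "ring_cycle m ! k = (k div 4, k mod 4 + 1)" if "k < 4 * m" for k
      using that by (simp add: ring_cycle_def)
    define q r where "q = p div 4" and "r = p mod 4"
    then have p: "p = 4 * q + r" "r < 4" "q < m" using \<open>p < 4 * m\<close> by auto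
    show ?thesis
    proof (cases "r = 3")
      case True
      then have "Suc p mod (4 * m) = 4 * ring_succ m q"
        using p by (simp add: ring_succ_def mod_mult_mult1[symmetric])
      then show ?thesis
        using True p nth[OF \<open>p < 4 * m\<close>] nth[of "4 * ring_succ m q"] ring_succ_less[of q m]
        by (simp add: ring_E_iff)
    next
      case False
      then have "Suc p < 4 * m" "Suc p div 4 = q" "Suc p mod 4 = r + 1" using p by auto
      then have "ring_cycle m ! p = (q, r + 1)" "ring_cycle m ! (Suc p mod (4 * m)) = (q, r + 2)"
        using nth[OF \<open>p < 4 * m\<close>] nth[of "Suc p"] p by simp_all
      moreover have "r = 0 \<or> r = 1 \<or> r = 2" using p False by auto
      then have "H (r + 1) (r + 2)" using assms(1-3) by (auto simp: numeral_eq_Suc)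
      ultimately show ?thesis using p by (simp add: ring_E_iff)
    qed
  qed
  ultimately show ?thesis using assms by (intro cycle_listI) (simp_all add: ring_cycle_def)
qed

lemma set_ring_cycle: "set (ring_cycle m) \<subseteq> ring_V m"
  by (auto simp: ring_cycle_def ring_V_def less_mult_imp_div_less)

lemma ring_port_edge_not_bridge:
  assumes "\<And>j k. H j k \<Longrightarrow> H k j" and "H 1 2" "H 2 3" "H 3 4"
    and "i < m" and uv: "{u, v} = {(i, 4), (ring_succ m i, 1)}"
  shows "\<not> is_bridge (ring_V m) (ring_E H m) u v"
proof (rule not_bridge_if_on_cycle_list[OF ring_E_sym[OF assms(1)] _ set_ring_cycle _ uv])
  show "cycle_list (ring_E H m) (ring_cycle m)"
    using assms(2-5) by (intro cycle_list_ring_cycle) simp_all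
  have nth: "ring_cycle m ! k = (k div 4, k mod 4 + 1)" if "k < 4 * m" for k
    using that by (simp add: ring_cycle_def)
  have "Suc (4 * i + 3) mod (4 * m) = 4 * ring_succ m i"
    by (simp add: ring_succ_def mod_mult_mult1[symmetric])
  moreover have "4 * ring_succ m i < 4 * m" using ring_succ_less[OF \<open>i < m\<close>] by simp
  ultimately have "(i, 4) = ring_cycle m ! (4 * i + 3) \<and>
      (ring_succ m i, 1) = ring_cycle m ! (Suc (4 * i + 3) mod length (ring_cycle m))"
    using \<open>i < m\<close> nth by (simp add: ring_cycle_def)
  moreover have "4 * i + 3 < length (ring_cycle m)" using \<open>i < m\<close> by (simp add: ring_cycle_def)
  ultimately show "((i, 4), (ring_succ m i, 1)) \<in> cycle_edges (ring_cycle m)"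
    unfolding mem_cycle_edges_iff by blast
qed

lemma ring_copy_edge_not_bridge:
  assumes sym: "\<And>j k. H j k \<Longrightarrow> H k j" and xs: "cycle_list H xs" "set xs \<subseteq> {1..6}"
    and "i < m" and jk: "(j, k) \<in> cycle_edges xs \<or> (k, j) \<in> cycle_edges xs"
  shows "\<not> is_bridge (ring_V m) (ring_E H m) (i, j) (i, k)"
proof -
  have V: "set (map (Pair i) xs) \<subseteq> ring_V m" using xs(2) \<open>i < m\<close> by (auto simp: ring_V_def)
  have directed: "\<not> is_bridge (ring_V m) (ring_E H m) (i, j) (i, k)"
    if "(a, b) \<in> cycle_edges xs" "{j, k} = {a, b}" for a b
  proof (rule not_bridge_if_on_cycle_list
      [OF ring_E_sym[OF sym] cycle_list_ring_copy[OF xs \<open>i < m\<close>] V])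
    show "((i, a), (i, b)) \<in> cycle_edges (map (Pair i) xs)"
      using that(1) by (auto simp: cycle_edges_map)
    show "{(i, j), (i, k)} = {(i, a), (i, b)}"
      using that(2) by (auto simp: doubleton_eq_iff)
  qed
  show ?thesis using jk directed[of j k] directed[of k j] by (auto simp: insert_commute)
qed

lemma bridgeless_ring_E:
  assumes sym: "\<And>j k. H j k \<Longrightarrow> H k j" and path: "H 1 2" "H 2 3" "H 3 4"
    and edges_on_cycles: "\<And>j k. H j k \<Longrightarrow>
      \<exists>xs. cycle_list H xs \<and> set xs \<subseteq> {1..6} \<and> ((j, k) \<in> cycle_edges xs \<or> (k, j) \<in> cycle_edges xs)"
  shows "bridgeless (ring_V m) (ring_E H m)"
  unfolding bridgeless_def
proof (intro notI, elim exE)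
  fix u v assume bridge: "is_bridge (ring_V m) (ring_E H m) u v"
  obtain i j where u: "u = (i, j)" by fastforce
  have "ring_E H m (i, j) v" using bridge u by (simp add: is_bridge_def)
  then have "i < m" and edge: "fst v = i \<and> H j (snd v) \<or>
      j = 4 \<and> v = (ring_succ m i, 1) \<or> j = 1 \<and> v = (ring_pred m i, 4)"
    by (simp_all add: ring_E_iff)
  from edge show False
  proof (elim disjE conjE)
    assume "fst v = i" "H j (snd v)"
    then obtain xs where "cycle_list H xs" "set xs \<subseteq> {1..6}"
      "(j, snd v) \<in> cycle_edges xs \<or> (snd v, j) \<in> cycle_edges xs"
      using edges_on_cycles by blast
    then have "\<not> is_bridge (ring_V m) (ring_E H m) (i, j) (i, snd v)"
      using ring_copy_edge_not_bridge[of H xs i m j "snd v", OF sym] \<open>i < m\<close> by blast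
    with bridge u \<open>fst v = i\<close> show False by (cases v) simp
  next
    assume "j = 4" "v = (ring_succ m i, 1)"
    then show False
      using ring_port_edge_not_bridge[OF sym path \<open>i < m\<close>] bridge u by blast
  next
    assume "j = 1" "v = (ring_pred m i, 4)"
    then have "{u, v} = {(ring_pred m i, 4), (ring_succ m (ring_pred m i), 1)}"
      using u ring_succ_pred[OF \<open>i < m\<close>] by auto
    then show False
      using ring_port_edge_not_bridge[OF sym path ring_pred_less[OF \<open>i < m\<close>]] bridge by blast
  qed
qed

lemma c2_ring_eqI:
  assumes immune_family: "\<And>i. i < m \<Longrightarrow>
      \<exists>\<C>. (\<forall>C\<in>\<C>. C \<noteq> {} \<and> C \<subseteq> {i} \<times> {1..6} \<and> immune E C) \<and> \<Inter>\<C> = {}"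
    and S: "conversion_set (ring_V m) E S" "card S = 2 * m"
  shows "c2 (ring_V m) E = 2 * m"
proof -
  have "2 * m \<le> card S'" if S': "conversion_set (ring_V m) E S'" for S'
  proof -
    let ?block = "\<lambda>i. S' \<inter> ({i} \<times> {1..6})"
    have "S' = (\<Union>i<m. ?block i)" using S' by (auto simp: conversion_set_def ring_V_def)
    also have "card \<dots> = (\<Sum>i<m. card (?block i))"
      by (rule card_UN_disjoint) auto
    finally have "card S' = (\<Sum>i<m. card (?block i))" .
    moreover have "2 \<le> card (?block i)" if i: "i < m" for i
    proof -
      obtain \<C> where "\<forall>C\<in>\<C>. C \<noteq> {} \<and> C \<subseteq> {i} \<times> {1..6} \<and> immune E C" "\<Inter>\<C> = {}"
        using immune_family[OF i] by blast
      then show ?thesis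
        using i by (intro two_le_card_conversion_set_inter[OF S']) (auto simp: ring_V_def)
    qed
    then have "(\<Sum>i<m. 2) \<le> (\<Sum>i<m. card (?block i))" by (intro sum_mono) simp
    ultimately show ?thesis by simp
  qed
  then show ?thesis unfolding c2_def by (intro Least_equality) (use S in auto)
qed

(* The hexagon v1 ... v6 of either gadget is an even cycle, coloured alternately 1 and 2; the one
  remaining edge at each vertex, a chord or a port edge, gets colour 0. *)
definition hexagon_colour :: "nat set \<Rightarrow> nat" where
  "hexagon_colour e =
     (if e \<in> {{1, 2}, {3, 4}, {5, 6}} then 1 else if e \<in> {{2, 3}, {4, 5}, {6, 1}} then 2 else 0)"

section \<open>The gadget H4\<close>

lemma H4_iff:
  "H4 j k \<longleftrightarrow> j = 1 \<and> k = 2 \<or> j = 2 \<and> k = 1 \<or> j = 2 \<and> k = 3 \<or> j = 3 \<and> k = 2 \<or>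
     j = 3 \<and> k = 4 \<or> j = 4 \<and> k = 3 \<or> j = 4 \<and> k = 5 \<or> j = 5 \<and> k = 4 \<or>
     j = 5 \<and> k = 6 \<or> j = 6 \<and> k = 5 \<or> j = 6 \<and> k = 1 \<or> j = 1 \<and> k = 6 \<or>
     j = 2 \<and> k = 6 \<or> j = 6 \<and> k = 2 \<or> j = 3 \<and> k = 5 \<or> j = 5 \<and> k = 3"
  by (auto simp: H4_def cyc6_def doubleton_eq_iff)

lemma H4_sym: "H4 j k \<Longrightarrow> H4 k j"
  by (auto simp: H4_iff)

lemma H4_irrefl: "\<not> H4 j j"
  by (simp add: H4_iff)

lemma G1_E_table:
  "G1_E m (i, 1) y \<longleftrightarrow> i < m \<and> y \<in> {(i, 2), (i, 6), (ring_pred m i, 4)}"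
  "G1_E m (i, 2) y \<longleftrightarrow> i < m \<and> y \<in> {(i, 1), (i, 3), (i, 6)}"
  "G1_E m (i, 3) y \<longleftrightarrow> i < m \<and> y \<in> {(i, 2), (i, 4), (i, 5)}"
  "G1_E m (i, 4) y \<longleftrightarrow> i < m \<and> y \<in> {(i, 3), (i, 5), (ring_succ m i, 1)}"
  "G1_E m (i, 5) y \<longleftrightarrow> i < m \<and> y \<in> {(i, 3), (i, 4), (i, 6)}"
  "G1_E m (i, 6) y \<longleftrightarrow> i < m \<and> y \<in> {(i, 1), (i, 2), (i, 5)}"
  by (cases y; auto simp: ring_E_iff H4_iff ring_succ_less ring_pred_less)+

(* Arithmetic simplification writes the index 1 as Suc 0, so the first row is needed in both
  forms. *)
lemmas G1_E_simps = G1_E_table G1_E_table(1)[unfolded One_nat_def]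

lemma G1_E_degree:
  assumes "v \<in> ring_V m"
  shows "degree (ring_V m) (G1_E m) v = 3"
proof -
  obtain i j where "v = (i, j)" "i < m" "j \<in> {1, 2, 3, 4, 5, 6}"
    using assms by (cases v) (simp add: ring_V_iff)
  moreover have "{u. u = a \<or> u = b \<or> u = c} = {a, b, c}" for a b c :: "nat \<times> nat" by auto
  ultimately show ?thesis
    by (simp only: insert_iff empty_iff simp_thms)
      (elim disjE; simp add: degree_def neighbours_ring_E G1_E_simps)
qed

lemma H4_edges_on_cycles:
  assumes "H4 j k"
  shows "\<exists>xs. cycle_list H4 xs \<and> set xs \<subseteq> {1..6} \<and>
    ((j, k) \<in> cycle_edges xs \<or> (k, j) \<in> cycle_edges xs)"
proof -
  let ?C1 = "[1, 2, 6] :: nat list" and ?C2 = "[3, 4, 5] :: nat list"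
    and ?C3 = "[2, 3, 5, 6] :: nat list"
  have "cycle_list H4 ?C1" "cycle_list H4 ?C2" "cycle_list H4 ?C3"
    by (simp_all add: cycle_list_def cycle_edges_def H4_iff)
  moreover have "set ?C1 \<subseteq> {1..6}" "set ?C2 \<subseteq> {1..6}" "set ?C3 \<subseteq> {1..6}" by auto
  moreover have "cycle_edges ?C1 \<union> cycle_edges ?C2 \<union> cycle_edges ?C3 =
      {(1, 2), (2, 6), (6, 1), (3, 4), (4, 5), (5, 3), (2, 3), (3, 5), (5, 6), (6, 2)}"
    by (auto simp: cycle_edges_def)
  moreover have "(j, k) \<in> \<dots> \<or> (k, j) \<in> \<dots>"
    using assms unfolding H4_iff by (elim disjE) simp_all
  ultimately show ?thesis by (metis UnE)
qed

lemma G1_E_hexagon_colouring: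
  "proper_edge_colouring (ring_V m) (G1_E m) 3 (\<lambda>e. hexagon_colour (snd ` e))"
proof (rule proper_edge_colouringI)
  show "G1_E m y x" if "G1_E m x y" for x y by (rule ring_E_sym[OF H4_sym that])
  show "hexagon_colour (snd ` e) < 3" for e by (simp add: hexagon_colour_def)
  fix x y z assume edges: "G1_E m x y" "G1_E m x z" "y \<noteq> z"
  have "x \<in> ring_V m" using edges(1) by (simp add: ring_E_def)
  then obtain i j where "x = (i, j)" "i < m" "j \<in> {1, 2, 3, 4, 5, 6}"
    by (cases x) (simp add: ring_V_iff)
  then show "hexagon_colour (snd ` {x, y}) \<noteq> hexagon_colour (snd ` {x, z})"
    using edges
    by (simp only: insert_iff empty_iff simp_thms)
      (elim disjE; simp add: G1_E_simps;
        elim disjE; simp add: hexagon_colour_def doubleton_eq_iff)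
qed

lemma G1_E_has_triangle: "0 < m \<Longrightarrow> has_triangle (ring_V m) (G1_E m)"
  unfolding has_triangle_def
  by (rule bexI[of _ "(0, 1)"], rule bexI[of _ "(0, 2)"], rule bexI[of _ "(0, 6)"])
    (auto simp: G1_E_simps ring_V_def)

lemma G1_E_immune_family:
  "\<exists>\<C>. (\<forall>C\<in>\<C>. C \<noteq> {} \<and> C \<subseteq> {i} \<times> {1..6} \<and> immune (G1_E m) C) \<and> \<Inter>\<C> = {}"
proof (intro exI conjI)
  have "immune (G1_E m) ({i} \<times> {1, 2, 6})" "immune (G1_E m) ({i} \<times> {3, 4, 5})"
    by (auto simp: immune_def G1_E_simps)
  then show "\<forall>C\<in>{{i} \<times> {1, 2, 6}, {i} \<times> {3, 4, 5}}. C \<noteq> {} \<and> C \<subseteq> {i} \<times> {1..6} \<and> immune (G1_E m) C"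
    by auto
qed auto

lemma G1_E_conversion_set: "conversion_set (ring_V m) (G1_E m) ({..<m} \<times> {2, 5})"
proof (rule conversion_set_two_rounds[where T = "{..<m} \<times> {2, 3, 5, 6}"])
  let ?S = "{..<m} \<times> {2, 5}" and ?T = "{..<m} \<times> {2, 3, 5, 6}"
  show "finite (ring_V m)" "?S \<subseteq> ring_V m" by (auto simp: ring_V_def)
  show "?T \<subseteq> conv_step (ring_V m) (G1_E m) ?S"
  proof clarify
    fix i j :: nat assume "i < m" "j \<in> {2, 3, 5, 6}"
    then consider "(i, j) \<in> ?S" | "j = 3" | "j = 6" by auto
    then show "(i, j) \<in> conv_step (ring_V m) (G1_E m) ?S"
      by cases (auto intro: subset_conv_step[THEN subsetD] conv_stepI[of _ _ _ "(i, 2)" "(i, 5)"]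
          simp: ring_V_def G1_E_simps \<open>i < m\<close>)
  qed
  show "ring_V m \<subseteq> conv_step (ring_V m) (G1_E m) ?T"
  proof clarify
    fix i j :: nat assume "(i, j) \<in> ring_V m"
    then consider "(i, j) \<in> ?T" | "i < m" "j = 1" | "i < m" "j = 4" by (auto simp: ring_V_iff)
    then show "(i, j) \<in> conv_step (ring_V m) (G1_E m) ?T"
      by cases (auto intro: subset_conv_step[THEN subsetD] conv_stepI[of _ _ _ "(i, 2)" "(i, 6)"]
          conv_stepI[of _ _ _ "(i, 3)" "(i, 5)"] simp: ring_V_def G1_E_simps)
  qed
qed

lemma G1_E_cubic: "cubic (ring_V m) (G1_E m)"
  using simple_graph_ring_E[of H4, OF H4_sym H4_irrefl] G1_E_degree by (simp add: cubic_def)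

lemma G1_E_bridgeless: "bridgeless (ring_V m) (G1_E m)"
  by (rule bridgeless_ring_E[of H4, OF H4_sym _ _ _ H4_edges_on_cycles]) (simp_all add: H4_iff)

lemma G1_E_class1: "0 < m \<Longrightarrow> class1 (ring_V m) (G1_E m)"
  by (rule class1_if_cubic_3_edge_colourable[OF G1_E_cubic _ G1_E_hexagon_colouring])
    (auto simp: ring_V_def)

lemma G1_E_c2: "c2 (ring_V m) (G1_E m) = 2 * m"
  by (rule c2_ring_eqI[OF G1_E_immune_family G1_E_conversion_set]) (simp add: card_cartesian_product)

section \<open>The gadget H2\<close>

lemma H2_iff:
  "H2 j k \<longleftrightarrow> j = 1 \<and> k = 2 \<or> j = 2 \<and> k = 1 \<or> j = 2 \<and> k = 3 \<or> j = 3 \<and> k = 2 \<or>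
     j = 3 \<and> k = 4 \<or> j = 4 \<and> k = 3 \<or> j = 4 \<and> k = 5 \<or> j = 5 \<and> k = 4 \<or>
     j = 5 \<and> k = 6 \<or> j = 6 \<and> k = 5 \<or> j = 6 \<and> k = 1 \<or> j = 1 \<and> k = 6 \<or>
     j = 2 \<and> k = 5 \<or> j = 5 \<and> k = 2 \<or> j = 3 \<and> k = 6 \<or> j = 6 \<and> k = 3"
  by (auto simp: H2_def cyc6_def doubleton_eq_iff)

lemma H2_sym: "H2 j k \<Longrightarrow> H2 k j"
  by (auto simp: H2_iff)

lemma H2_irrefl: "\<not> H2 j j"
  by (simp add: H2_iff)

lemma G2_E_table:
  "G2_E m (i, 1) y \<longleftrightarrow> i < m \<and> y \<in> {(i, 2), (i, 6), (ring_pred m i, 4)}"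
  "G2_E m (i, 2) y \<longleftrightarrow> i < m \<and> y \<in> {(i, 1), (i, 3), (i, 5)}"
  "G2_E m (i, 3) y \<longleftrightarrow> i < m \<and> y \<in> {(i, 2), (i, 4), (i, 6)}"
  "G2_E m (i, 4) y \<longleftrightarrow> i < m \<and> y \<in> {(i, 3), (i, 5), (ring_succ m i, 1)}"
  "G2_E m (i, 5) y \<longleftrightarrow> i < m \<and> y \<in> {(i, 2), (i, 4), (i, 6)}"
  "G2_E m (i, 6) y \<longleftrightarrow> i < m \<and> y \<in> {(i, 1), (i, 3), (i, 5)}"
  by (cases y; auto simp: ring_E_iff H2_iff ring_succ_less ring_pred_less)+

lemmas G2_E_simps = G2_E_table G2_E_table(1)[unfolded One_nat_def]

lemma G2_E_degree:
  assumes "v \<in> ring_V m"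
  shows "degree (ring_V m) (G2_E m) v = 3"
proof -
  obtain i j where "v = (i, j)" "i < m" "j \<in> {1, 2, 3, 4, 5, 6}"
    using assms by (cases v) (simp add: ring_V_iff)
  moreover have "{u. u = a \<or> u = b \<or> u = c} = {a, b, c}" for a b c :: "nat \<times> nat" by auto
  ultimately show ?thesis
    by (simp only: insert_iff empty_iff simp_thms)
      (elim disjE; simp add: degree_def neighbours_ring_E G2_E_simps)
qed

lemma H2_edges_on_cycles:
  assumes "H2 j k"
  shows "\<exists>xs. cycle_list H2 xs \<and> set xs \<subseteq> {1..6} \<and>
    ((j, k) \<in> cycle_edges xs \<or> (k, j) \<in> cycle_edges xs)"
proof -
  let ?C1 = "[1, 2, 5, 6] :: nat list" and ?C2 = "[2, 3, 4, 5] :: nat list"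
    and ?C3 = "[3, 4, 5, 6] :: nat list"
  have "cycle_list H2 ?C1" "cycle_list H2 ?C2" "cycle_list H2 ?C3"
    by (simp_all add: cycle_list_def cycle_edges_def H2_iff)
  moreover have "set ?C1 \<subseteq> {1..6}" "set ?C2 \<subseteq> {1..6}" "set ?C3 \<subseteq> {1..6}" by auto
  moreover have "cycle_edges ?C1 \<union> cycle_edges ?C2 \<union> cycle_edges ?C3 =
      {(1, 2), (2, 5), (5, 6), (6, 1), (2, 3), (3, 4), (4, 5), (5, 2), (6, 3)}"
    by (auto simp: cycle_edges_def)
  moreover have "(j, k) \<in> \<dots> \<or> (k, j) \<in> \<dots>"
    using assms unfolding H2_iff by (elim disjE) simp_all
  ultimately show ?thesis by (metis UnE)
qed

lemma G2_E_hexagon_colouring: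
  "proper_edge_colouring (ring_V m) (G2_E m) 3 (\<lambda>e. hexagon_colour (snd ` e))"
proof (rule proper_edge_colouringI)
  show "G2_E m y x" if "G2_E m x y" for x y by (rule ring_E_sym[OF H2_sym that])
  show "hexagon_colour (snd ` e) < 3" for e by (simp add: hexagon_colour_def)
  fix x y z assume edges: "G2_E m x y" "G2_E m x z" "y \<noteq> z"
  have "x \<in> ring_V m" using edges(1) by (simp add: ring_E_def)
  then obtain i j where "x = (i, j)" "i < m" "j \<in> {1, 2, 3, 4, 5, 6}"
    by (cases x) (simp add: ring_V_iff)
  then show "hexagon_colour (snd ` {x, y}) \<noteq> hexagon_colour (snd ` {x, z})"
    using edges
    by (simp only: insert_iff empty_iff simp_thms)
      (elim disjE; simp add: G2_E_simps;
        elim disjE; simp add: hexagon_colour_def doubleton_eq_iff)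
qed

lemma G2_E_immune_family:
  "\<exists>\<C>. (\<forall>C\<in>\<C>. C \<noteq> {} \<and> C \<subseteq> {i} \<times> {1..6} \<and> immune (G2_E m) C) \<and> \<Inter>\<C> = {}"
proof (intro exI conjI)
  let ?\<C> = "{{i} \<times> {2, 3, 4, 5}, {i} \<times> {1, 2, 5, 6}, {i} \<times> {3, 4, 5, 6}, {i} \<times> {1, 2, 3, 6}}
    :: (nat \<times> nat) set set"
  have "immune (G2_E m) ({i} \<times> {2, 3, 4, 5})" "immune (G2_E m) ({i} \<times> {1, 2, 5, 6})"
    "immune (G2_E m) ({i} \<times> {3, 4, 5, 6})" "immune (G2_E m) ({i} \<times> {1, 2, 3, 6})"
    by (auto simp: immune_def G2_E_simps)
  then show "\<forall>C\<in>?\<C>. C \<noteq> {} \<and> C \<subseteq> {i} \<times> {1..6} \<and> immune (G2_E m) C"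
    by auto
  show "\<Inter>?\<C> = {}" by auto
qed

lemma G2_E_conversion_set: "conversion_set (ring_V m) (G2_E m) ({..<m} \<times> {2, 6})"
proof (rule conversion_set_two_rounds[where T = "{..<m} \<times> {1, 2, 3, 5, 6}"])
  let ?S = "{..<m} \<times> {2, 6}" and ?T = "{..<m} \<times> {1, 2, 3, 5, 6}"
  show "finite (ring_V m)" "?S \<subseteq> ring_V m" by (auto simp: ring_V_def)
  show "?T \<subseteq> conv_step (ring_V m) (G2_E m) ?S"
  proof clarify
    fix i j :: nat assume "i < m" "j \<in> {1, 2, 3, 5, 6}"
    then consider "(i, j) \<in> ?S" | "j = 1" | "j = 3" | "j = 5" by auto
    then show "(i, j) \<in> conv_step (ring_V m) (G2_E m) ?S"
      by cases (auto intro: subset_conv_step[THEN subsetD] conv_stepI[of _ _ _ "(i, 2)" "(i, 6)"]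
          simp: ring_V_def G2_E_simps \<open>i < m\<close>)
  qed
  show "ring_V m \<subseteq> conv_step (ring_V m) (G2_E m) ?T"
  proof clarify
    fix i j :: nat assume "(i, j) \<in> ring_V m"
    then consider "(i, j) \<in> ?T" | "i < m" "j = 4" by (auto simp: ring_V_iff)
    then show "(i, j) \<in> conv_step (ring_V m) (G2_E m) ?T"
      by cases (auto intro: subset_conv_step[THEN subsetD] conv_stepI[of _ _ _ "(i, 3)" "(i, 5)"]
          simp: ring_V_def G2_E_simps)
  qed
qed

lemma G2_E_bipartite: "G2_E m x y \<Longrightarrow> odd (snd x) \<noteq> odd (snd y)"
  by (cases x) (auto simp: ring_E_iff H2_iff)

lemma G2_E_cubic: "cubic (ring_V m) (G2_E m)"
  using simple_graph_ring_E[of H2, OF H2_sym H2_irrefl] G2_E_degree by (simp add: cubic_def)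

lemma G2_E_bridgeless: "bridgeless (ring_V m) (G2_E m)"
  by (rule bridgeless_ring_E[of H2, OF H2_sym _ _ _ H2_edges_on_cycles]) (simp_all add: H2_iff)

lemma G2_E_class1: "0 < m \<Longrightarrow> class1 (ring_V m) (G2_E m)"
  by (rule class1_if_cubic_3_edge_colourable[OF G2_E_cubic _ G2_E_hexagon_colouring])
    (auto simp: ring_V_def)

lemma G2_E_c2: "c2 (ring_V m) (G2_E m) = 2 * m"
  by (rule c2_ring_eqI[OF G2_E_immune_family G2_E_conversion_set]) (simp add: card_cartesian_product)

lemma G2_E_triangle_free: "\<not> has_triangle (ring_V m) (G2_E m)"
  by (rule no_triangle_if_bipartite[OF G2_E_bipartite])

lemma double_minus_ceiling_eq_floor:
  "int (2 * m) - \<lceil>(real (6 * m) + 2) / 4\<rceil> = \<lfloor>(real m - 1) / 2\<rfloor>"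
proof -
  obtain k where "m = 2 * k \<or> m = 2 * k + 1"
    by (metis odd_two_times_div_two_succ even_two_times_div_two)
  then show ?thesis
  proof
    assume m: "m = 2 * k"
    have "\<lceil>(real (6 * m) + 2) / 4\<rceil> = int (3 * k + 1)" by (rule ceiling_unique) (simp_all add: m)
    moreover have "\<lfloor>(real m - 1) / 2\<rfloor> = int k - 1" by (rule floor_unique) (simp_all add: m)
    ultimately show ?thesis using m by simp
  next
    assume m: "m = 2 * k + 1"
    have "\<lceil>(real (6 * m) + 2) / 4\<rceil> = int (3 * k + 2)" by (rule ceiling_unique) (simp_all add: m)
    moreover have "\<lfloor>(real m - 1) / 2\<rfloor> = int k" by (rule floor_unique) (simp_all add: m)
    ultimately show ?thesis using m by simp
  qed
qed

theorem proposition5p8: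
  fixes m :: nat
  assumes "m \<ge> 3"
  shows "(cubic (ring_V m) (G1_E m) \<and> bridgeless (ring_V m) (G1_E m) \<and>
         class1 (ring_V m) (G1_E m) \<and> has_triangle (ring_V m) (G1_E m)) \<and>
         (cubic (ring_V m) (G2_E m) \<and> bridgeless (ring_V m) (G2_E m) \<and>
         class1 (ring_V m) (G2_E m) \<and> \<not> has_triangle (ring_V m) (G2_E m)) \<and>
         (\<forall>E \<in> {G1_E m, G2_E m}.
           int (c2 (ring_V m) E) - \<lceil>(real (card (ring_V m)) + 2) / 4\<rceil>
             = \<lfloor>(real m - 1) / 2\<rfloor>)"
proof -
  have "0 < m" using assms by simp
  have gap: "int (c2 (ring_V m) E) - \<lceil>(real (card (ring_V m)) + 2) / 4\<rceil> = \<lfloor>(real m - 1) / 2\<rfloor>"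
    if "c2 (ring_V m) E = 2 * m" for E :: "nat \<times> nat \<Rightarrow> nat \<times> nat \<Rightarrow> bool"
    using that double_minus_ceiling_eq_floor by (simp add: card_ring_V)
  show ?thesis
    using G1_E_cubic G1_E_bridgeless G1_E_class1[OF \<open>0 < m\<close>] G1_E_has_triangle[OF \<open>0 < m\<close>]
      G2_E_cubic G2_E_bridgeless G2_E_class1[OF \<open>0 < m\<close>] G2_E_triangle_free
      gap[OF G1_E_c2] gap[OF G2_E_c2]
    by blast
qed

end
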